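(* Let $n\ge1$ and let $\phi_n$ be the basic limit function of $S_n$. Then $$0<\phi_n(-2n+2)<\phi_n(-2n+3)<\cdots<\phi_n(-1)<\phi_n(0),$$ and moreover $$\phi_n(-n)=\frac{n-1}{2n-1}\,\phi_n(0).$$
   Context: For an integer $n\ge1$, the subdivision scheme $S_n$ acts on real sequences $\mathbf f^k=(f^k_i)_{i\in\mathbb Z}$ (the value $f^k_i$ being associated with the dyadic point $2^{-k}i$) by the refinement rules $$f^{k+1}_{2i}=\frac1{2n-1}\sum_{j=-n+1}^{n-1}f^k_{i+j},\qquad f^{k+1}_{2i+1}=\frac1{2n}\sum_{j=-n+1}^{n}f^k_{i+j}.$$ This scheme is convergent: for every bounded initial sequence $\mathbf f^0$ there is a continuous $F:\mathbb R\to\mathbb R$ with $\lim_{k\to\infty}\sup_i|f^k_i-F(2^{-k}i)|=0$. The basic limit function $\phi_n$ is the limit function generated from the initial data $\delta$, where $\delta_0=1$ and $\delta_i=0$ for $i\neq0$. *)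

theory Defs
  imports "HOL-Analysis.Analysis"
begin

definition refine :: "nat \<Rightarrow> (int \<Rightarrow> real) \<Rightarrow> (int \<Rightarrow> real)" where
  "refine n f i =
     (if even i
      then (1 / (2 * real n - 1)) * (\<Sum>j = - int n + 1 .. int n - 1. f (i div 2 + j))
      else (1 / (2 * real n)) * (\<Sum>j = - int n + 1 .. int n. f (i div 2 + j)))"

definition subdiv :: "nat \<Rightarrow> nat \<Rightarrow> (int \<Rightarrow> real) \<Rightarrow> (int \<Rightarrow> real)" where
  "subdiv n k f = (refine n ^^ k) f"

definition delta :: "int \<Rightarrow> real" where
  "delta i = (if i = 0 then 1 else 0)"

definition is_limit_function :: "nat \<Rightarrow> (int \<Rightarrow> real) \<Rightarrow> (real \<Rightarrow> real) \<Rightarrow> bool" where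
  "is_limit_function n f F \<longleftrightarrow>
     continuous_on UNIV F \<and>
     (\<forall>e>0. \<exists>K. \<forall>k\<ge>K. \<forall>i. \<bar>subdiv n k f i - F (real_of_int i / 2 ^ k)\<bar> \<le> e)"

definition is_basic_limit_function :: "nat \<Rightarrow> (real \<Rightarrow> real) \<Rightarrow> bool" where
  "is_basic_limit_function n phi \<longleftrightarrow> is_limit_function n delta phi"

end

theory Submission
  imports Defs
begin

text \<open>
  Write v(j) for phi_n(j). The level-k data at the points 2^k j converge to v(j), and since the
  scheme is linear and turns a shift by s at level k into a shift by 2s at level k+1, these
  integer samples obey the two-scale relation of the scheme: v(j) is the mean of the 2n-1 even
  values v(2j+2t) plus the mean of the 2n odd values v(2j+2t-1). In the limit v
  is therefore a nonnegative, symmetric fixed point of this relation, supported in |j| <= 2n-2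
  and summing to 1.

  Telescoping the relation, v(j+1) - v(j) for j < 0 is a nonnegative combination of v(2j+2n)
  and v(2j+2n+1); so v increases on the negative axis, is positive at 0, and a look at the last
  zero of v left of 0 shows that v(2-2n) > 0, after which every increment is strictly positive.
  Finally the windows of the relation at -n and at n together cover exactly the window at 0
  with the point 0 removed, whence 2 v(-n) = v(0) - v(0)/(2n-1).
\<close>

lemma sum_int_telescope:
  fixes f :: "int \<Rightarrow> 'a::ab_group_add"
  assumes "a \<le> b + 1"
  shows "(\<Sum>t\<in>{a..b}. f (t + 1) - f t) = f (b + 1) - f a"
proof -
  have "(\<Sum>t\<in>{a..a + int m - 1}. f (t + 1) - f t) = f (a + int m) - f a" for m
  proof (induction m)
    case (Suc m)
    have "{a..a + int (Suc m) - 1} = insert (a + int m) {a..a + int m - 1}"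
      by auto
    with Suc show ?case
      by (simp add: algebra_simps)
  qed simp
  from this[of "nat (b + 1 - a)"] assms show ?thesis
    by simp
qed

lemma sum_int_split:
  fixes g :: "int \<Rightarrow> 'a::comm_monoid_add"
  assumes "a \<le> m + 1" and "m \<le> b"
  shows "sum g {a..b} = sum g {a..m} + sum g {m + 1..b}"
proof -
  have "{a..b} = {a..m} \<union> {m + 1..b}"
    using assms by auto
  then show ?thesis
    by (simp add: sum.union_disjoint)
qed

lemma has_sum_sum:
  fixes f :: "'i \<Rightarrow> 'a \<Rightarrow> 'b::topological_comm_monoid_add"
  assumes "finite I" and "\<And>i. i \<in> I \<Longrightarrow> (f i has_sum s i) A"
  shows "((\<lambda>x. \<Sum>i\<in>I. f i x) has_sum (\<Sum>i\<in>I. s i)) A"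
  using assms by (induction I rule: finite_induct) (auto intro: has_sum_add)

lemma range_double_plus: "range (\<lambda>j::int. 2 * j + c) = {i. even (i - c)}"
proof -
  have "i \<in> range (\<lambda>j. 2 * j + c)" if "even (i - c)" for i
    using that by (intro range_eqI[of _ _ "(i - c) div 2"]) auto
  then show ?thesis by auto
qed

lemma has_sum_comp_double_plus:
  "((\<lambda>j::int. w (2 * j + c)) has_sum a) UNIV \<longleftrightarrow> (w has_sum a) {i. even (i - c)}"
proof -
  have "inj (\<lambda>j::int. 2 * j + c)"
    by (auto simp: inj_def)
  from has_sum_reindex[OF this, of w a] show ?thesis
    by (simp add: range_double_plus comp_def)
qed

section \<open>Linearity and shift equivariance of the refinement\<close>

lemma refine_add:
  "refine n (\<lambda>i. f i + g i) i = refine n f i + refine n g i"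
  by (simp add: refine_def sum.distrib algebra_simps)

lemma refine_sum_shifts:
  "refine n (\<lambda>i. \<Sum>t\<in>T. c t * g (i + s t)) i = (\<Sum>t\<in>T. c t * refine n g (i + 2 * s t))"
proof -
  have "even (i + 2 * s) = even i" "(i + 2 * s) div 2 = i div 2 + s" for s :: int
    by simp_all
  then show ?thesis
    by (simp add: refine_def sum_distrib_left sum.swap[of _ T] algebra_simps)
qed

lemma refine_pow_add:
  "(refine n ^^ k) (\<lambda>i. f i + g i) = (\<lambda>i. (refine n ^^ k) f i + (refine n ^^ k) g i)"
  by (induction k) (simp_all add: refine_add)

lemma refine_pow_sum_shifts:
  "(refine n ^^ k) (\<lambda>i. \<Sum>t\<in>T. c t * g (i + s t))
     = (\<lambda>i. \<Sum>t\<in>T. c t * (refine n ^^ k) g (i + 2 ^ k * s t))"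
proof (induction k)
  case (Suc k)
  show ?case
    by (simp add: Suc.IH fun_eq_iff refine_sum_shifts[where s = "\<lambda>t. 2 ^ k * s t"] mult.assoc)
qed simp

lemma refine_delta:
  "refine n delta = (\<lambda>i. (\<Sum>t\<in>{- int n + 1 .. int n - 1}. 1 / (2 * real n - 1) * delta (i + 2 * t))
                       + (\<Sum>t\<in>{- int n + 1 .. int n}. 1 / (2 * real n) * delta (i + (2 * t - 1))))"
proof
  fix i :: int
  have "delta (i + 2 * t) = (if even i then delta (i div 2 + t) else 0)"
       "delta (i + (2 * t - 1)) = (if even i then 0 else delta (i div 2 + t))" for t
    by (cases "even i"; erule evenE oddE; simp add: delta_def; presburger)+
  then show "refine n delta i = (\<Sum>t\<in>{- int n + 1 .. int n - 1}. 1 / (2 * real n - 1) * delta (i + 2 * t))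
                       + (\<Sum>t\<in>{- int n + 1 .. int n}. 1 / (2 * real n) * delta (i + (2 * t - 1)))"
    by (simp add: refine_def sum_distrib_left)
qed

section \<open>The two-scale relation\<close>

definition two_scale :: "nat \<Rightarrow> (int \<Rightarrow> real) \<Rightarrow> int \<Rightarrow> real" where
  "two_scale n w j =
     (\<Sum>t\<in>{- int n + 1 .. int n - 1}. w (2 * j + 2 * t)) / (2 * real n - 1)
   + (\<Sum>t\<in>{- int n + 1 .. int n}. w (2 * j + (2 * t - 1))) / (2 * real n)"

lemma two_scale_nonneg:
  assumes "n \<ge> 1" and "\<And>i. 0 \<le> w i"
  shows "0 \<le> two_scale n w j"
  using assms unfolding two_scale_def by (intro add_nonneg_nonneg divide_nonneg_nonneg sum_nonneg) auto

lemma two_scale_eq_0: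
  assumes "\<And>i. 2 * int n - 2 < \<bar>i\<bar> \<Longrightarrow> w i = 0" and "2 * int n - 2 < \<bar>j\<bar>"
  shows "two_scale n w j = 0"
proof -
  have "(\<Sum>t\<in>{- int n + 1 .. int n - 1}. w (2 * j + 2 * t)) = 0"
       "(\<Sum>t\<in>{- int n + 1 .. int n}. w (2 * j + (2 * t - 1))) = 0"
    by (rule sum.neutral; use assms in auto)+
  then show ?thesis by (simp add: two_scale_def)
qed

lemma two_scale_symmetric:
  assumes "\<And>i. w (- i) = w i"
  shows "two_scale n w (- j) = two_scale n w j"
proof -
  have w: "w (a - b) = w (b - a)" for a b
    using assms[of "b - a"] by simp
  have "(\<Sum>t\<in>{- int n + 1 .. int n - 1}. w (2 * (- j) + 2 * t)) = (\<Sum>t\<in>{- int n + 1 .. int n - 1}. w (2 * j + 2 * t))"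
    by (rule sum.reindex_bij_witness[where i = uminus and j = uminus]) (auto simp: algebra_simps intro: w)
  moreover have "(\<Sum>t\<in>{- int n + 1 .. int n}. w (2 * (- j) + (2 * t - 1))) = (\<Sum>t\<in>{- int n + 1 .. int n}. w (2 * j + (2 * t - 1)))"
    by (rule sum.reindex_bij_witness[where i = "\<lambda>t. 1 - t" and j = "\<lambda>t. 1 - t"]) (auto simp: algebra_simps intro: w)
  ultimately show ?thesis
    by (simp add: two_scale_def)
qed

lemma has_sum_two_scale:
  assumes "n \<ge> 1" and "(w has_sum a) {i. even i}" and "(w has_sum b) {i. odd i}"
  shows "(two_scale n w has_sum (a + b)) UNIV"
proof -
  have "((\<lambda>j. w (2 * j + 2 * t)) has_sum a) UNIV" "((\<lambda>j. w (2 * j + (2 * t - 1))) has_sum b) UNIV" for t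
    using assms by (simp_all add: has_sum_comp_double_plus)
  then have "(two_scale n w has_sum ((\<Sum>t\<in>{- int n + 1 .. int n - 1}. a) / (2 * real n - 1)
                                   + (\<Sum>t\<in>{- int n + 1 .. int n}. b) / (2 * real n))) UNIV"
    unfolding two_scale_def[abs_def] by (intro has_sum_add has_sum_divide_const has_sum_sum) auto
  moreover have "(\<Sum>t\<in>{- int n + 1 .. int n - 1}. a) / (2 * real n - 1)
                   + (\<Sum>t\<in>{- int n + 1 .. int n}. b) / (2 * real n) = a + b"
    using assms(1) by (simp add: of_nat_diff)
  ultimately show ?thesis by simp
qed

lemma sum_two_scale:
  assumes "n \<ge> 1" and "\<And>i. 2 * int n - 2 < \<bar>i\<bar> \<Longrightarrow> w i = 0"
  shows "(\<Sum>j\<in>{-(2 * int n - 2) .. 2 * int n - 2}. two_scale n w j)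
           = (\<Sum>i\<in>{-(2 * int n - 2) .. 2 * int n - 2}. w i)"
    (is "sum _ ?I = _")
proof -
  have "(w has_sum sum w (?I \<inter> {i. even i})) {i. even i}"
       "(w has_sum sum w (?I \<inter> {i. odd i})) {i. odd i}"
    by (rule has_sum_finite_neutralI; use assms(2) in force)+
  moreover have "sum w (?I \<inter> {i. even i}) + sum w (?I \<inter> {i. odd i}) = sum w ?I"
    by (subst sum.union_disjoint[symmetric]) (auto intro: sum.cong)
  ultimately have "(two_scale n w has_sum sum w ?I) UNIV"
    using has_sum_two_scale[OF assms(1)] by metis
  moreover have "(two_scale n w has_sum sum (two_scale n w) ?I) UNIV"
    by (rule has_sum_finite_neutralI) (auto intro: two_scale_eq_0 assms(2))
  ultimately show ?thesis
    using has_sum_unique by blast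
qed

lemma two_scale_increment:
  assumes "n \<ge> 1"
  shows "two_scale n w (j + 1) - two_scale n w j =
           (w (2 * j + 2 * int n) - w (2 * j - 2 * int n + 2)) / (2 * real n - 1)
         + (w (2 * j + 2 * int n + 1) - w (2 * j - 2 * int n + 1)) / (2 * real n)"
proof -
  have even: "(\<Sum>t\<in>{- int n + 1 .. int n - 1}. w (2 * (j + 1) + 2 * t))
                - (\<Sum>t\<in>{- int n + 1 .. int n - 1}. w (2 * j + 2 * t))
          = w (2 * j + 2 * int n) - w (2 * j - 2 * int n + 2)"
    using sum_int_telescope[of "- int n + 1" "int n - 1" "\<lambda>t. w (2 * j + 2 * t)"] assms
    by (simp add: sum_subtractf algebra_simps)
  have odd: "(\<Sum>t\<in>{- int n + 1 .. int n}. w (2 * (j + 1) + (2 * t - 1)))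
                - (\<Sum>t\<in>{- int n + 1 .. int n}. w (2 * j + (2 * t - 1)))
          = w (2 * j + 2 * int n + 1) - w (2 * j - 2 * int n + 1)"
    using sum_int_telescope[of "- int n + 1" "int n" "\<lambda>t. w (2 * j + (2 * t - 1))"] assms
    by (simp add: sum_subtractf algebra_simps)
  show ?thesis
    unfolding two_scale_def even[symmetric] odd[symmetric] by (simp add: diff_divide_distrib)
qed

lemma two_scale_minus_plus:
  assumes "n \<ge> 1" and "\<And>i. 2 * int n - 2 < \<bar>i\<bar> \<Longrightarrow> w i = 0"
  shows "two_scale n w (- int n) + two_scale n w (int n) = two_scale n w 0 - w 0 / (2 * real n - 1)"
proof -
  define N where "N = int n"
  have N: "1 \<le> N" and w0: "\<And>i. 2 * N - 2 < \<bar>i\<bar> \<Longrightarrow> w i = 0"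
    using assms by (simp_all add: N_def)
  have shift_even:
      "(\<Sum>t\<in>{- N + 1 .. N - 1}. w (2 * (- N) + 2 * t)) = (\<Sum>s\<in>{- 2 * N + 1 .. - 1}. w (2 * s))"
      "(\<Sum>t\<in>{- N + 1 .. N - 1}. w (2 * N + 2 * t)) = (\<Sum>s\<in>{1 .. 2 * N - 1}. w (2 * s))"
    by (rule sum.reindex_bij_witness[where i = "\<lambda>s. s + N" and j = "\<lambda>t. t - N"], auto simp: algebra_simps)
       (rule sum.reindex_bij_witness[where i = "\<lambda>s. s - N" and j = "\<lambda>t. t + N"], auto simp: algebra_simps)
  have shift_odd:
      "(\<Sum>t\<in>{- N + 1 .. N}. w (2 * (- N) + (2 * t - 1))) = (\<Sum>s\<in>{- 2 * N + 1 .. 0}. w (2 * s - 1))"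
      "(\<Sum>t\<in>{- N + 1 .. N}. w (2 * N + (2 * t - 1))) = (\<Sum>s\<in>{1 .. 2 * N}. w (2 * s - 1))"
    by (rule sum.reindex_bij_witness[where i = "\<lambda>s. s + N" and j = "\<lambda>t. t - N"], auto simp: algebra_simps)
       (rule sum.reindex_bij_witness[where i = "\<lambda>s. s - N" and j = "\<lambda>t. t + N"], auto simp: algebra_simps)
  have split_even: "(\<Sum>s\<in>{- 2 * N + 1 .. - 1}. w (2 * s)) + (\<Sum>s\<in>{1 .. 2 * N - 1}. w (2 * s))
                     = (\<Sum>s\<in>{- N + 1 .. N - 1}. w (2 * s)) - w 0"
  proof -
    have "(\<Sum>s\<in>{- 2 * N + 1 .. 2 * N - 1}. w (2 * s))
            = (\<Sum>s\<in>{- 2 * N + 1 .. - 1}. w (2 * s)) + w 0 + (\<Sum>s\<in>{1 .. 2 * N - 1}. w (2 * s))"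
      using N sum_int_split[of "- 2 * N + 1" "- 1" "2 * N - 1" "\<lambda>s. w (2 * s)"]
        sum_int_split[of 0 0 "2 * N - 1" "\<lambda>s. w (2 * s)"]
      by (simp add: add.assoc)
    moreover have "(\<Sum>s\<in>{- 2 * N + 1 .. 2 * N - 1}. w (2 * s)) = (\<Sum>s\<in>{- N + 1 .. N - 1}. w (2 * s))"
      by (rule sum.mono_neutral_right) (auto intro!: w0)
    ultimately show ?thesis by simp
  qed
  have split_odd: "(\<Sum>s\<in>{- 2 * N + 1 .. 0}. w (2 * s - 1)) + (\<Sum>s\<in>{1 .. 2 * N}. w (2 * s - 1))
                    = (\<Sum>s\<in>{- N + 1 .. N}. w (2 * s - 1))"
  proof -
    have "(\<Sum>s\<in>{- 2 * N + 1 .. 2 * N}. w (2 * s - 1))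
            = (\<Sum>s\<in>{- 2 * N + 1 .. 0}. w (2 * s - 1)) + (\<Sum>s\<in>{1 .. 2 * N}. w (2 * s - 1))"
      using N sum_int_split[of "- 2 * N + 1" 0 "2 * N" "\<lambda>s. w (2 * s - 1)"] by simp
    moreover have "(\<Sum>s\<in>{- 2 * N + 1 .. 2 * N}. w (2 * s - 1)) = (\<Sum>s\<in>{- N + 1 .. N}. w (2 * s - 1))"
      by (rule sum.mono_neutral_right) (auto intro!: w0)
    ultimately show ?thesis by simp
  qed
  have "two_scale n w (- N) + two_scale n w N
          = ((\<Sum>s\<in>{- 2 * N + 1 .. - 1}. w (2 * s)) + (\<Sum>s\<in>{1 .. 2 * N - 1}. w (2 * s))) / (2 * real n - 1)
          + ((\<Sum>s\<in>{- 2 * N + 1 .. 0}. w (2 * s - 1)) + (\<Sum>s\<in>{1 .. 2 * N}. w (2 * s - 1))) / (2 * real n)"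
    unfolding two_scale_def N_def[symmetric] shift_even shift_odd by (simp add: add_divide_distrib algebra_simps)
  also have "\<dots> = two_scale n w 0 - w 0 / (2 * real n - 1)"
    unfolding split_even split_odd by (simp add: two_scale_def N_def diff_divide_distrib)
  finally show ?thesis
    by (simp add: N_def)
qed

section \<open>Nonnegative symmetric fixed points of the two-scale relation\<close>

locale two_scale_fixpoint =
  fixes n :: nat and v :: "int \<Rightarrow> real"
  assumes n_ge_1: "n \<ge> 1"
    and nonneg: "0 \<le> v i"
    and vanishes: "2 * int n - 2 < \<bar>i\<bar> \<Longrightarrow> v i = 0"
    and symmetric: "v (- i) = v i"
    and fixpoint: "two_scale n v j = v j"
    and nonzero: "v \<noteq> (\<lambda>_. 0)"
begin

lemma increment_neg:
  assumes "j < 0"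
  shows "v (j + 1) - v j = v (2 * j + 2 * int n) / (2 * real n - 1) + v (2 * j + 2 * int n + 1) / (2 * real n)"
proof -
  have "v (2 * j - 2 * int n + 2) = 0" "v (2 * j - 2 * int n + 1) = 0"
    using assms n_ge_1 by (auto intro!: vanishes)
  then show ?thesis
    using two_scale_increment[OF n_ge_1, of v j] by (simp add: fixpoint)
qed

lemma weighted_nonneg: "0 \<le> v i / (2 * real n - 1)" "0 \<le> v i / (2 * real n)"
  using nonneg n_ge_1 by simp_all

lemma increment_neg_nonneg:
  assumes "j < 0"
  shows "v j \<le> v (j + 1)"
  using increment_neg[OF assms] weighted_nonneg[of "2 * j + 2 * int n"]
    weighted_nonneg[of "2 * j + 2 * int n + 1"] by linarith

lemma mono_nonpos:
  assumes "i \<le> j" and "j \<le> 0"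
  shows "v i \<le> v j"
proof -
  have step: "v (- int (Suc m)) \<le> v (- int m)" for m
    using increment_neg_nonneg[of "- int (Suc m)"] by simp
  have "v (- int m') \<le> v (- int m)" if "m \<le> m'" for m m'
    using lift_Suc_antimono_le[of "\<lambda>m. v (- int m)", OF step that] .
  from this[of "nat (- j)" "nat (- i)"] assms show ?thesis
    by simp
qed

lemma antimono_abs:
  assumes "\<bar>i\<bar> \<le> \<bar>j\<bar>"
  shows "v j \<le> v i"
proof -
  have "v i = v (- \<bar>i\<bar>)" "v j = v (- \<bar>j\<bar>)"
    by (simp_all add: abs_if symmetric)
  with assms show ?thesis
    by (simp add: mono_nonpos)
qed

lemma pos_at_0: "0 < v 0"
proof (rule ccontr)
  assume "\<not> 0 < v 0"
  then have "v i = 0" for i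
    using antimono_abs[of 0 i] nonneg[of i] by simp
  with nonzero show False
    by auto
qed

lemma increment_neg_eq_0:
  assumes "j < 0" and "v (j + 1) = v j"
  shows "v (2 * j + 2 * int n) = 0" and "v (2 * j + 2 * int n + 1) = 0"
proof -
  have "v (2 * j + 2 * int n) / (2 * real n - 1) = 0" "v (2 * j + 2 * int n + 1) / (2 * real n) = 0"
    using increment_neg[OF assms(1)] assms(2) weighted_nonneg[of "2 * j + 2 * int n"]
      weighted_nonneg[of "2 * j + 2 * int n + 1"] by linarith+
  then show "v (2 * j + 2 * int n) = 0" "v (2 * j + 2 * int n + 1) = 0"
    using n_ge_1 by simp_all
qed

lemma last_zero_neg:
  assumes "v (- 2 * int n + 2) = 0"
  obtains j where "- 2 * int n + 2 \<le> j" "j < 0" "v j = 0" "0 < v (j + 1)"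
proof -
  define Z where "Z = {i \<in> {- 2 * int n + 2 .. 0}. v i = 0}"
  define j where "j = Max Z"
  have "Z \<subseteq> {- 2 * int n + 2 .. 0}"
    by (auto simp: Z_def)
  then have "finite Z"
    by (rule finite_subset) simp
  have "- 2 * int n + 2 \<in> Z"
    using n_ge_1 assms by (simp add: Z_def)
  then have "j \<in> Z"
    unfolding j_def using \<open>finite Z\<close> by (intro Max_in) auto
  then have j: "- 2 * int n + 2 \<le> j" "j \<le> 0" "v j = 0"
    by (simp_all add: Z_def)
  then have "j < 0"
    using pos_at_0 by (cases "j = 0") auto
  have "j + 1 \<notin> Z"
    using Max_ge[OF \<open>finite Z\<close>, of "j + 1"] unfolding j_def by auto
  then have "v (j + 1) \<noteq> 0"
    using j \<open>j < 0\<close> by (simp add: Z_def)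
  then have "0 < v (j + 1)"
    using nonneg by (simp add: order_less_le)
  with j \<open>j < 0\<close> that show ?thesis
    by blast
qed

lemma pos_at_left_end: "0 < v (- 2 * int n + 2)"
proof (rule ccontr)
  assume "\<not> 0 < v (- 2 * int n + 2)"
  then have "v (- 2 * int n + 2) = 0"
    using nonneg by (simp add: order_less_le)
  then obtain j where j: "- 2 * int n + 2 \<le> j" "j < 0" "v j = 0" and pos: "0 < v (j + 1)"
    by (rule last_zero_neg)
  \<comment> \<open>The vanishing increment at j - 1 kills v (2j + 2n - 1); as v decreases in |i|, this
    index lies beyond -j, so the increment at j vanishes as well.\<close>
  have "v (j - 1) = 0"
    using mono_nonpos[of "j - 1" j] j nonneg[of "j - 1"] by simp
  then have "v (2 * j + 2 * int n - 1) = 0"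
    using increment_neg_eq_0(2)[of "j - 1"] j by (simp add: algebra_simps)
  then have "\<not> \<bar>2 * j + 2 * int n - 1\<bar> \<le> \<bar>j + 1\<bar>"
    using antimono_abs[of "2 * j + 2 * int n - 1" "j + 1"] pos by auto
  then have "\<bar>j\<bar> \<le> \<bar>2 * j + 2 * int n\<bar>" "\<bar>j\<bar> \<le> \<bar>2 * j + 2 * int n + 1\<bar>"
    using j by auto
  then have "v (2 * j + 2 * int n) \<le> v j" "v (2 * j + 2 * int n + 1) \<le> v j"
    by (simp_all add: antimono_abs)
  then have "v (2 * j + 2 * int n) = 0" "v (2 * j + 2 * int n + 1) = 0"
    using nonneg[of "2 * j + 2 * int n"] nonneg[of "2 * j + 2 * int n + 1"] j(3) by linarith+
  then show False
    using increment_neg[OF j(2)] j(3) pos by simp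
qed

lemma strict_mono_neg:
  assumes "- 2 * int n + 2 \<le> j" and "j < 0"
  shows "v j < v (j + 1)"
proof -
  have "\<bar>2 * j + 2 * int n\<bar> \<le> \<bar>- 2 * int n + 2\<bar>"
    using assms n_ge_1 by auto
  then have "v (- 2 * int n + 2) \<le> v (2 * j + 2 * int n)"
    by (rule antimono_abs)
  then have "0 < v (2 * j + 2 * int n)"
    using pos_at_left_end by linarith
  then have "0 < v (2 * j + 2 * int n) / (2 * real n - 1)"
    using n_ge_1 by simp
  then show ?thesis
    using increment_neg[OF assms(2)] weighted_nonneg(2)[of "2 * j + 2 * int n + 1"] by linarith
qed

lemma value_at_minus_n: "v (- int n) = (real n - 1) / (2 * real n - 1) * v 0"
proof -
  have "two_scale n v (- int n) + two_scale n v (int n) = two_scale n v 0 - v 0 / (2 * real n - 1)"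
    by (rule two_scale_minus_plus[OF n_ge_1]) (erule vanishes)
  then have "2 * v (- int n) = v 0 - v 0 / (2 * real n - 1)"
    using symmetric[of "int n"] by (simp add: fixpoint)
  then show ?thesis
    using n_ge_1 by (simp add: field_simps)
qed

end

section \<open>The values of the basic limit function at the integers\<close>

definition integer_samples :: "nat \<Rightarrow> nat \<Rightarrow> int \<Rightarrow> real" where
  "integer_samples n k j = subdiv n k delta (2 ^ k * j)"

lemma integer_samples_0: "integer_samples n 0 = delta"
  by (simp add: fun_eq_iff integer_samples_def subdiv_def)

lemma integer_samples_Suc: "integer_samples n (Suc k) = two_scale n (integer_samples n k)"
proof
  fix j :: int
  have arg: "2 ^ Suc k * j + 2 ^ k * s = 2 ^ k * (2 * j + s)" for s :: int
    by (simp add: algebra_simps)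
  have "integer_samples n (Suc k) j = (refine n ^^ k) (refine n delta) (2 ^ Suc k * j)"
    by (simp only: integer_samples_def subdiv_def funpow_Suc_right comp_def)
  also have "\<dots> = two_scale n (integer_samples n k) j"
    unfolding refine_delta refine_pow_add arg
      refine_pow_sum_shifts[where g = delta and s = "\<lambda>t. 2 * t"]
      refine_pow_sum_shifts[where g = delta and s = "\<lambda>t. 2 * t - 1"]
    by (simp add: two_scale_def integer_samples_def subdiv_def sum_divide_distrib)
  finally show "integer_samples n (Suc k) j = two_scale n (integer_samples n k) j" .
qed

lemma integer_samples_nonneg: "n \<ge> 1 \<Longrightarrow> 0 \<le> integer_samples n k i"
  by (induction k arbitrary: i) (simp_all add: integer_samples_0 integer_samples_Suc delta_def two_scale_nonneg)

lemma integer_samples_vanish: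
  "n \<ge> 1 \<Longrightarrow> 2 * int n - 2 < \<bar>i\<bar> \<Longrightarrow> integer_samples n k i = 0"
  by (induction k arbitrary: i) (simp_all add: integer_samples_0 integer_samples_Suc delta_def two_scale_eq_0)

lemma integer_samples_symmetric: "integer_samples n k (- i) = integer_samples n k i"
  by (induction k arbitrary: i) (simp_all add: integer_samples_0 integer_samples_Suc delta_def two_scale_symmetric)

lemma sum_integer_samples:
  assumes "n \<ge> 1"
  shows "(\<Sum>i\<in>{-(2 * int n - 2) .. 2 * int n - 2}. integer_samples n k i) = 1"
proof (induction k)
  case 0
  show ?case
    using assms by (simp add: integer_samples_0 delta_def)
next
  case (Suc k)
  then show ?case
    using sum_two_scale[OF assms integer_samples_vanish[OF assms]] by (simp add: integer_samples_Suc)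
qed

lemma integer_samples_tendsto:
  assumes "is_basic_limit_function n phi"
  shows "(\<lambda>k. integer_samples n k j) \<longlonglongrightarrow> phi (of_int j)"
proof (rule LIMSEQ_I)
  fix r :: real
  assume "0 < r"
  with assms obtain K where K: "\<forall>k\<ge>K. \<forall>i. \<bar>subdiv n k delta i - phi (of_int i / 2 ^ k)\<bar> \<le> r / 2"
    unfolding is_basic_limit_function_def is_limit_function_def by (meson half_gt_zero)
  have "\<bar>integer_samples n k j - phi (of_int j)\<bar> < r" if "K \<le> k" for k
    using K[rule_format, OF that, of "2 ^ k * j"] \<open>0 < r\<close> by (simp add: integer_samples_def)
  then show "\<exists>K. \<forall>k\<ge>K. norm (integer_samples n k j - phi (of_int j)) < r"
    by auto
qed

lemma basic_limit_function_two_scale_fixpoint: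
  assumes "n \<ge> 1" and "is_basic_limit_function n phi"
  shows "two_scale_fixpoint n (\<lambda>j. phi (of_int j))"
proof
  note lim = integer_samples_tendsto[OF assms(2)]
  show "n \<ge> 1" by (fact assms(1))
  show "0 \<le> phi (of_int i)" for i
    using lim[of i] integer_samples_nonneg[OF assms(1)] by (intro LIMSEQ_le_const) auto
  show "phi (of_int i) = 0" if "2 * int n - 2 < \<bar>i\<bar>" for i
    using lim[of i] integer_samples_vanish[OF assms(1) that] by (simp add: LIMSEQ_const_iff)
  show "phi (of_int (- i)) = phi (of_int i)" for i
  proof (rule LIMSEQ_unique)
    show "(\<lambda>k. integer_samples n k i) \<longlonglongrightarrow> phi (of_int (- i))"
      using lim[of "- i"] unfolding integer_samples_symmetric .
  qed (fact lim)
  show "two_scale n (\<lambda>j. phi (of_int j)) j = phi (of_int j)" for j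
  proof (rule LIMSEQ_unique)
    show "(\<lambda>k. integer_samples n (Suc k) j) \<longlonglongrightarrow> phi (of_int j)"
      using lim[of j] by (rule LIMSEQ_Suc)
    show "(\<lambda>k. integer_samples n (Suc k) j) \<longlonglongrightarrow> two_scale n (\<lambda>j. phi (of_int j)) j"
      unfolding integer_samples_Suc two_scale_def using assms(1) by (intro tendsto_intros lim) auto
  qed
  have "(\<lambda>k. \<Sum>i\<in>{-(2 * int n - 2) .. 2 * int n - 2}. integer_samples n k i)
          \<longlonglongrightarrow> (\<Sum>i\<in>{-(2 * int n - 2) .. 2 * int n - 2}. phi (of_int i))"
    by (intro tendsto_intros lim)
  then have "(\<Sum>i\<in>{-(2 * int n - 2) .. 2 * int n - 2}. phi (of_int i)) = 1"
    using sum_integer_samples[OF assms(1)] by (simp add: LIMSEQ_const_iff)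
  then show "(\<lambda>j. phi (of_int j)) \<noteq> (\<lambda>_. 0)"
    by (metis sum.neutral_const zero_neq_one)
qed

theorem lemma3:
  fixes n :: nat and phi :: "real \<Rightarrow> real"
  assumes "n \<ge> 1"
    and "is_basic_limit_function n phi"
  shows "0 < phi (of_int (- 2 * int n + 2))
       \<and> (\<forall>j::int. - 2 * int n + 2 \<le> j \<and> j < 0 \<longrightarrow> phi (of_int j) < phi (of_int (j + 1)))
       \<and> phi (- real n) = (real n - 1) / (2 * real n - 1) * phi 0"
proof -
  interpret two_scale_fixpoint n "\<lambda>j. phi (of_int j)"
    using assms by (rule basic_limit_function_two_scale_fixpoint)
  show ?thesis
    using pos_at_left_end strict_mono_neg value_at_minus_n by simp
qed

end
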